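(* Let $(G_i)_{i\in I}$ be a finite collection of groups. For $J\subset I$ put $G_J=\prod_{i\in J}G_i$ and let $p_J\colon G_I\to G_J$ be the projection, with induced ring homomorphism $\mathbb Zp_J\colon\mathbb ZG_I\to\mathbb ZG_J$. Then for every $s\in\mathbb N$, $$\bigcap_{J\subset I,\ \#J<s}\ker(\mathbb Zp_J)\subset\Delta(G_I)^s.$$
   Context: For a group $G$, $\mathbb ZG$ is the integral group ring, $\Delta(G)$ its augmentation ideal (kernel of the map sending each group element to $1$), $\Delta(G)^0=\mathbb ZG$ and $\Delta(G)^s$ its $s$-th power. An empty intersection of subsets of $\mathbb ZG_I$ is $\mathbb ZG_I$. *)

theory Defs
  imports "HOL-Algebra.Algebra"
begin

definition fsupp :: "('a \<Rightarrow> int) \<Rightarrow> 'a set" where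
  "fsupp f = {x. f x \<noteq> 0}"

definition group_ring :: "('a, 'b) monoid_scheme \<Rightarrow> ('a \<Rightarrow> int) ring" where
  "group_ring G = \<lparr> carrier = {f. finite (fsupp f) \<and> fsupp f \<subseteq> carrier G},
     monoid.mult = (\<lambda>f h. \<lambda>x. if x \<in> carrier G
                         then (\<Sum>y\<in>fsupp f. f y * h (inv\<^bsub>G\<^esub> y \<otimes>\<^bsub>G\<^esub> x)) else 0),
     one = (\<lambda>x. if x = \<one>\<^bsub>G\<^esub> then 1 else 0),
     ring.zero = (\<lambda>x. 0),
     ring.add = (\<lambda>f h. \<lambda>x. f x + h x) \<rparr>"

definition augmentation :: "('a \<Rightarrow> int) \<Rightarrow> int" where
  "augmentation f = (\<Sum>x\<in>fsupp f. f x)"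

definition aug_ideal :: "('a, 'b) monoid_scheme \<Rightarrow> ('a \<Rightarrow> int) set" where
  "aug_ideal G = {f \<in> carrier (group_ring G). augmentation f = 0}"

fun ideal_pow :: "('a, 'b) ring_scheme \<Rightarrow> 'a set \<Rightarrow> nat \<Rightarrow> 'a set" where
  "ideal_pow R D 0 = carrier R"
| "ideal_pow R D (Suc s) = ideal_prod R (ideal_pow R D s) D"

definition induced_map :: "('a \<Rightarrow> 'c) \<Rightarrow> ('a \<Rightarrow> int) \<Rightarrow> ('c \<Rightarrow> int)" where
  "induced_map p f = (\<lambda>y. \<Sum>x\<in>{x \<in> fsupp f. p x = y}. f x)"

definition proj :: "'i set \<Rightarrow> ('i \<Rightarrow> 'g) \<Rightarrow> ('i \<Rightarrow> 'g)" where
  "proj J x = restrict x J"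

end

theory Submission
  imports Defs "HOL-Library.Function_Algebras"
begin

text \<open>For \<open>g \<in> G_I\<close> and \<open>L \<subseteq> I\<close> let \<open>g_L\<close> agree with \<open>g\<close> on \<open>L\<close> and be \<open>1\<close>
  elsewhere, and put \<open>u_K(g) = \<Sum>_{L \<subseteq> K} (-1)^|K - L| g_L\<close> in \<open>\<int>G_I\<close>. As \<open>g_L\<close> is the
  product of the \<open>g_{k}\<close> with \<open>k \<in> L\<close>, \<open>u_K(g)\<close> is the product of the \<open>|K|\<close> elements
  \<open>g_{k} - 1\<close> of \<open>\<Delta>(G_I)\<close>, so it lies in \<open>\<Delta>(G_I)^|K|\<close>. Moebius inversion on the
  subsets of \<open>I\<close> gives \<open>g = g_I = \<Sum>_{K \<subseteq> I} u_K(g)\<close>, hence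
  \<open>f = \<Sum>_K \<Sum>_g f(g) u_K(g)\<close>. The map \<open>g \<mapsto> g_L\<close> has the same fibres as \<open>p_L\<close>, so if
  \<open>f\<close> lies in every \<open>ker \<int>p_L\<close> with \<open>|L| < s\<close>, the terms with \<open>|K| < s\<close> vanish and
  what remains is a sum of elements of \<open>\<Delta>(G_I)^s\<close>.\<close>

lemma sum_fun_apply: "(sum F A) x = (\<Sum>a\<in>A. F a x)"
  by (induction A rule: infinite_finite_induct) auto

lemma sum_Pow_insert:
  assumes "finite K" "k \<notin> K"
  shows "(\<Sum>L\<in>Pow (insert k K). F L) = (\<Sum>L\<in>Pow K. F L) + (\<Sum>L\<in>Pow K. F (insert k L))"
proof -
  have "Pow K \<inter> insert k ` Pow K = {}" using assms(2) by auto
  moreover have "inj_on (insert k) (Pow K)"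
    using assms(2) unfolding inj_on_def by (metis Diff_insert_absorb PowD subsetD)
  ultimately show ?thesis
    using assms(1) by (simp add: Pow_insert sum.union_disjoint sum.reindex)
qed

lemma sum_Pow_alternating_inversion:
  fixes F :: "'a set \<Rightarrow> 'b::ring_1"
  assumes "finite A"
  shows "(\<Sum>K\<in>Pow A. \<Sum>L\<in>Pow K. (-1) ^ card (K - L) * F L) = F A"
proof -
  have "F A = (\<Sum>K\<in>Pow A. (-1) ^ card K * (\<Sum>L\<in>Pow K. (-1) ^ card L * F L))"
    by (rule inclusion_exclusion_symmetric[OF refl assms])
  also have "\<dots> = (\<Sum>K\<in>Pow A. \<Sum>L\<in>Pow K. (-1) ^ card (K - L) * F L)"
  proof (rule sum.cong[OF refl])
    fix K assume "K \<in> Pow A"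
    then have K: "finite K" using assms finite_subset by blast
    have "(-1) ^ card K * ((-1) ^ card L * F L) = (-1) ^ card (K - L) * F L" if "L \<subseteq> K" for L
      using that K card_mono[OF K that]
      by (simp add: card_Diff_subset finite_subset mult.assoc[symmetric]
          neg_one_power_add_eq_neg_one_power_diff flip: power_add)
    then show "(-1) ^ card K * (\<Sum>L\<in>Pow K. (-1) ^ card L * F L)
             = (\<Sum>L\<in>Pow K. (-1) ^ card (K - L) * F L)"
      by (simp add: sum_distrib_left)
  qed
  finally show ?thesis ..
qed

lemma augmentation_eq_sum:
  assumes "finite S" "fsupp f \<subseteq> S"
  shows "augmentation f = (\<Sum>x\<in>S. f x)"
  unfolding augmentation_def
  by (rule sum.mono_neutral_left) (use assms in \<open>auto simp: fsupp_def\<close>)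

lemma induced_map_eq_zero_if_same_fibres:
  assumes "induced_map p f = (\<lambda>y. 0)"
    and "\<And>x x'. x \<in> fsupp f \<Longrightarrow> x' \<in> fsupp f \<Longrightarrow> q x = q x' \<longleftrightarrow> p x = p x'"
  shows "induced_map q f z = 0"
proof (cases "\<exists>x\<in>fsupp f. q x = z")
  case True
  then obtain x0 where "x0 \<in> fsupp f" "q x0 = z" by blast
  then have "{x \<in> fsupp f. q x = z} = {x \<in> fsupp f. p x = p x0}" using assms(2) by auto
  then have "induced_map q f z = induced_map p f (p x0)" by (simp add: induced_map_def)
  then show ?thesis using assms(1) by simp
next
  case False
  then show ?thesis unfolding induced_map_def by (intro sum.neutral) auto
qed

definition aug_generator :: "('a, 'c) monoid_scheme \<Rightarrow> int \<Rightarrow> 'a \<Rightarrow> 'a \<Rightarrow> int" where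
  "aug_generator P c y = (\<lambda>w. c * ((if w = y then 1 else 0) - (if w = \<one>\<^bsub>P\<^esub> then 1 else 0)))"

lemma (in group) aug_generator_in_aug_ideal:
  assumes "y \<in> carrier G"
  shows "aug_generator G c y \<in> aug_ideal G"
proof -
  have supp: "fsupp (aug_generator G c y) \<subseteq> {y, \<one>}" by (auto simp: fsupp_def aug_generator_def)
  have "augmentation (aug_generator G c y) = (\<Sum>w\<in>{y, \<one>}. aug_generator G c y w)"
    by (rule augmentation_eq_sum[OF _ supp]) simp
  also have "\<dots> = 0"
    by (cases "y = \<one>") (simp_all add: aug_generator_def)
  finally have "augmentation (aug_generator G c y) = 0" .
  with supp assms show ?thesis
    unfolding aug_ideal_def group_ring_def by (auto intro: finite_subset)
qed

lemma (in group) mult_aug_generator_apply: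
  assumes "a \<in> carrier (group_ring G)" "y \<in> carrier G" "x \<in> carrier G"
  shows "(a \<otimes>\<^bsub>group_ring G\<^esub> aug_generator G c y) x = c * (a (x \<otimes> inv y) - a x)"
proof -
  have fs: "finite (fsupp a)" "fsupp a \<subseteq> carrier G" using assms(1) by (auto simp: group_ring_def)
  have "(a \<otimes>\<^bsub>group_ring G\<^esub> aug_generator G c y) x
      = (\<Sum>z\<in>fsupp a. a z * aug_generator G c y (inv z \<otimes> x))"
    using assms(3) by (simp add: group_ring_def)
  also have "\<dots> = (\<Sum>z\<in>fsupp a. c * ((if z = x \<otimes> inv y then a z else 0) - (if z = x then a z else 0)))"
  proof (rule sum.cong[OF refl])
    fix z assume "z \<in> fsupp a"
    then have z: "z \<in> carrier G" using fs by auto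
    have "inv z \<otimes> x = y \<longleftrightarrow> z = x \<otimes> inv y"
      using z assms(2,3) by (metis inv_closed inv_inv inv_solve_left' inv_solve_right)
    moreover have "inv z \<otimes> x = \<one> \<longleftrightarrow> z = x"
      using z assms(3) by (metis inv_closed inv_inv inv_equality l_inv)
    ultimately show "a z * aug_generator G c y (inv z \<otimes> x)
        = c * ((if z = x \<otimes> inv y then a z else 0) - (if z = x then a z else 0))"
      by (auto simp: aug_generator_def algebra_simps)
  qed
  also have "\<dots> = c * ((\<Sum>z\<in>fsupp a. if z = x \<otimes> inv y then a z else 0)
                       - (\<Sum>z\<in>fsupp a. if z = x then a z else 0))"
    by (simp only: sum_subtractf[symmetric] sum_distrib_left)
  also have "\<dots> = c * (a (x \<otimes> inv y) - a x)"
    using fs(1) by (simp add: sum.delta') (simp add: fsupp_def)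
  finally show ?thesis .
qed

lemma zero_in_ideal_pow_aug: "(\<lambda>x. 0) \<in> ideal_pow (group_ring P) (aug_ideal P) n"
proof (induction n)
  case 0
  show ?case by (simp add: group_ring_def fsupp_def)
next
  case (Suc n)
  have "(\<lambda>x. 0::int) \<in> aug_ideal P"
    by (simp add: aug_ideal_def group_ring_def fsupp_def augmentation_def)
  with Suc have "(\<lambda>x. 0::int) \<otimes>\<^bsub>group_ring P\<^esub> (\<lambda>x. 0)
      \<in> ideal_prod (group_ring P) (ideal_pow (group_ring P) (aug_ideal P) n) (aug_ideal P)"
    by (rule ideal_prod.prod)
  moreover have "(\<lambda>x. 0::int) \<otimes>\<^bsub>group_ring P\<^esub> (\<lambda>x. 0) = (\<lambda>x. 0)"
    by (simp add: group_ring_def fsupp_def fun_eq_iff)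
  ultimately show ?case by simp
qed

lemma add_in_ideal_pow_aug:
  assumes "a \<in> ideal_pow (group_ring P) (aug_ideal P) n" "b \<in> ideal_pow (group_ring P) (aug_ideal P) n"
  shows "a + b \<in> ideal_pow (group_ring P) (aug_ideal P) n"
proof (cases n)
  case 0
  have "fsupp (a + b) \<subseteq> fsupp a \<union> fsupp b" by (auto simp: fsupp_def)
  then show ?thesis using assms 0 by (auto simp: group_ring_def intro: finite_subset)
next
  case (Suc m)
  have "a \<oplus>\<^bsub>group_ring P\<^esub> b
      \<in> ideal_prod (group_ring P) (ideal_pow (group_ring P) (aug_ideal P) m) (aug_ideal P)"
    by (rule ideal_prod.sum) (use assms Suc in simp_all)
  moreover have "a \<oplus>\<^bsub>group_ring P\<^esub> b = a + b" by (simp add: group_ring_def fun_eq_iff)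
  ultimately show ?thesis using Suc by simp
qed

lemma sum_in_ideal_pow_aug:
  assumes "finite A" "\<And>a. a \<in> A \<Longrightarrow> F a \<in> ideal_pow (group_ring P) (aug_ideal P) n"
  shows "(\<Sum>a\<in>A. F a) \<in> ideal_pow (group_ring P) (aug_ideal P) n"
  using assms
proof (induction A rule: finite_induct)
  case empty
  show ?case using zero_in_ideal_pow_aug by (simp add: zero_fun_def)
next
  case (insert a A)
  then show ?case unfolding sum.insert[OF insert.hyps] by (intro add_in_ideal_pow_aug) auto
qed

text \<open>\<open>pad_one I G L g\<close> and \<open>mixed_diff I G K g\<close> are the \<open>g_L\<close> and \<open>u_K(g)\<close> above.\<close>

definition pad_one ::
    "'i set \<Rightarrow> ('i \<Rightarrow> ('g, 'b) monoid_scheme) \<Rightarrow> 'i set \<Rightarrow> ('i \<Rightarrow> 'g) \<Rightarrow> ('i \<Rightarrow> 'g)" where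
  "pad_one I G L g = (\<lambda>i\<in>I. if i \<in> L then g i else \<one>\<^bsub>G i\<^esub>)"

definition mixed_diff ::
    "'i set \<Rightarrow> ('i \<Rightarrow> ('g, 'b) monoid_scheme) \<Rightarrow> 'i set \<Rightarrow> ('i \<Rightarrow> 'g) \<Rightarrow> ('i \<Rightarrow> 'g) \<Rightarrow> int" where
  "mixed_diff I G K g =
    (\<lambda>x. \<Sum>L\<in>Pow K. (-1) ^ card (K - L) * (if x = pad_one I G L g then 1 else 0))"

context
  fixes I :: "'i set" and G :: "'i \<Rightarrow> ('g, 'b) monoid_scheme"
  assumes finite_I: "finite I" and group_G: "\<And>i. i \<in> I \<Longrightarrow> group (G i)"
begin

abbreviation (input) "GI \<equiv> product_group I G"
abbreviation (input) "ZGI \<equiv> group_ring GI"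
abbreviation (input) "DeltaI \<equiv> aug_ideal GI"

lemma group_GI: "group GI"
  using group_G by simp

lemma pad_one_in_carrier: "g \<in> carrier GI \<Longrightarrow> pad_one I G L g \<in> carrier GI"
  using group_G by (auto simp: pad_one_def group.is_monoid monoid.one_closed)

lemma pad_one_mult_singleton:
  assumes "g \<in> carrier GI" "k \<notin> L"
  shows "pad_one I G L g \<otimes>\<^bsub>GI\<^esub> pad_one I G {k} g = pad_one I G (insert k L) g"
proof -
  have "\<And>i. i \<in> I \<Longrightarrow> g i \<in> carrier (G i)" using assms(1) by auto
  then show ?thesis using assms(2) group_G
    by (auto simp: pad_one_def fun_eq_iff group.is_monoid monoid.r_one monoid.l_one monoid.one_closed)
qed

lemma pad_one_all: "g \<in> carrier GI \<Longrightarrow> pad_one I G I g = g"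
  by (auto simp: pad_one_def fun_eq_iff PiE_def extensional_def)

lemma pad_one_eq_iff_proj_eq:
  assumes "L \<subseteq> I"
  shows "pad_one I G L g = pad_one I G L g' \<longleftrightarrow> proj L g = proj L g'"
proof
  assume eq: "pad_one I G L g = pad_one I G L g'"
  show "proj L g = proj L g'"
  proof
    fix i
    show "proj L g i = proj L g' i"
      using fun_cong[OF eq, of i] assms by (auto simp: pad_one_def proj_def)
  qed
next
  assume eq: "proj L g = proj L g'"
  have "g i = g' i" if "i \<in> L" for i
    using fun_cong[OF eq, of i] that by (simp add: proj_def)
  then show "pad_one I G L g = pad_one I G L g'"
    by (auto simp: pad_one_def)
qed

lemma mixed_diff_outside_carrier:
  assumes "g \<in> carrier GI" "x \<notin> carrier GI"
  shows "mixed_diff I G K g x = 0"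
proof -
  have "\<And>L. x \<noteq> pad_one I G L g" using pad_one_in_carrier[OF assms(1)] assms(2) by metis
  then show ?thesis by (simp add: mixed_diff_def)
qed

lemma mixed_diff_insert:
  assumes "finite K" "k \<notin> K" "g \<in> carrier GI" "x \<in> carrier GI"
  shows "mixed_diff I G (insert k K) g x
     = mixed_diff I G K g (x \<otimes>\<^bsub>GI\<^esub> inv\<^bsub>GI\<^esub> pad_one I G {k} g)
       - mixed_diff I G K g x"
proof -
  interpret P: group "GI" by (rule group_GI)
  let ?x' = "x \<otimes>\<^bsub>GI\<^esub> inv\<^bsub>GI\<^esub> pad_one I G {k} g"
  have shift: "x = pad_one I G (insert k L) g \<longleftrightarrow> ?x' = pad_one I G L g" if "L \<subseteq> K" for L
  proof -
    have "k \<notin> L" using that assms(2) by auto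
    then show ?thesis
      using P.inv_solve_right'[OF pad_one_in_carrier[OF assms(3), of L] assms(4)
          pad_one_in_carrier[OF assms(3), of "{k}"]]
        pad_one_mult_singleton[OF assms(3)]
      by simp
  qed
  have card_insert_diff: "card (insert k K - L) = Suc (card (K - L))" if "L \<subseteq> K" for L
  proof -
    have "insert k K - L = insert k (K - L)" using that assms(2) by auto
    then show ?thesis using assms(1,2) by simp
  qed
  have "insert k K - insert k L = K - L" for L using assms(2) by auto
  then have "mixed_diff I G (insert k K) g x
      = (\<Sum>L\<in>Pow K. (-1) ^ card (insert k K - L) * (if x = pad_one I G L g then 1 else 0))
      + (\<Sum>L\<in>Pow K. (-1) ^ card (K - L) * (if x = pad_one I G (insert k L) g then 1 else 0))"
    unfolding mixed_diff_def by (simp add: sum_Pow_insert[OF assms(1,2)])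
  also have "\<dots> = - mixed_diff I G K g x + mixed_diff I G K g ?x'"
    unfolding mixed_diff_def sum_negf[symmetric]
    by (intro arg_cong2[where f = "(+)"] sum.cong) (auto simp: card_insert_diff shift)
  finally show ?thesis by simp
qed

lemma mixed_diff_in_carrier:
  assumes "finite K" "g \<in> carrier GI"
  shows "(\<lambda>x. c * mixed_diff I G K g x) \<in> carrier ZGI"
proof -
  have supp: "fsupp (\<lambda>x. c * mixed_diff I G K g x) \<subseteq> (\<lambda>L. pad_one I G L g) ` Pow K"
  proof
    fix x assume "x \<in> fsupp (\<lambda>x. c * mixed_diff I G K g x)"
    then have "mixed_diff I G K g x \<noteq> 0" by (simp add: fsupp_def)
    then obtain L where "L \<in> Pow K"
        "(-1) ^ card (K - L) * (if x = pad_one I G L g then 1 else 0) \<noteq> (0::int)"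
      unfolding mixed_diff_def by (rule sum.not_neutral_contains_not_neutral)
    then show "x \<in> (\<lambda>L. pad_one I G L g) ` Pow K" by (auto split: if_splits)
  qed
  moreover have "finite ((\<lambda>L. pad_one I G L g) ` Pow K)" using assms(1) by simp
  moreover have "(\<lambda>L. pad_one I G L g) ` Pow K \<subseteq> carrier GI"
    using pad_one_in_carrier[OF assms(2)] by blast
  ultimately show ?thesis
    unfolding group_ring_def by (auto dest: finite_subset)
qed

lemma mixed_diff_mult_aug_generator:
  assumes "finite K" "k \<notin> K" "g \<in> carrier GI"
  shows "mixed_diff I G K g \<otimes>\<^bsub>ZGI\<^esub> aug_generator GI c (pad_one I G {k} g)
       = (\<lambda>x. c * mixed_diff I G (insert k K) g x)"
proof
  fix x
  show "(mixed_diff I G K g \<otimes>\<^bsub>ZGI\<^esub> aug_generator GI c (pad_one I G {k} g)) x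
      = c * mixed_diff I G (insert k K) g x"
  proof (cases "x \<in> carrier GI")
    case True
    have "mixed_diff I G K g \<in> carrier ZGI"
      using mixed_diff_in_carrier[OF assms(1,3), of 1] by simp
    then show ?thesis
      using group.mult_aug_generator_apply[OF group_GI _ pad_one_in_carrier[OF assms(3)] True]
        mixed_diff_insert[OF assms True] by simp
  next
    case False
    then show ?thesis
      using mixed_diff_outside_carrier[OF assms(3) False] by (simp add: group_ring_def)
  qed
qed

lemma mixed_diff_in_ideal_pow:
  assumes "g \<in> carrier GI"
  shows "finite K \<Longrightarrow> n \<le> card K
    \<Longrightarrow> (\<lambda>x. c * mixed_diff I G K g x) \<in> ideal_pow ZGI DeltaI n"
proof (induction n arbitrary: K c)
  case 0
  then show ?case using mixed_diff_in_carrier[OF _ assms] by simp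
next
  case (Suc n)
  then obtain k where k: "k \<in> K" by fastforce
  have "finite (K - {k})" "n \<le> card (K - {k})" using Suc k by auto
  then have "mixed_diff I G (K - {k}) g \<in> ideal_pow ZGI DeltaI n"
    using Suc.IH[of "K - {k}" 1] by simp
  moreover have "aug_generator GI c (pad_one I G {k} g) \<in> DeltaI"
    by (rule group.aug_generator_in_aug_ideal[OF group_GI pad_one_in_carrier[OF assms]])
  ultimately have "mixed_diff I G (K - {k}) g \<otimes>\<^bsub>ZGI\<^esub> aug_generator GI c (pad_one I G {k} g)
      \<in> ideal_prod ZGI (ideal_pow ZGI DeltaI n) DeltaI"
    by (rule ideal_prod.prod)
  then show ?case
    using mixed_diff_mult_aug_generator[OF \<open>finite (K - {k})\<close> _ assms, of k c] k
    by (simp add: insert_absorb)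
qed

lemma mixed_diff_terms_in_ideal_pow:
  assumes "fsupp f \<subseteq> carrier GI" "K \<subseteq> I" "n \<le> card K"
  shows "(\<Sum>g\<in>fsupp f. (\<lambda>x. f g * mixed_diff I G K g x)) \<in> ideal_pow ZGI DeltaI n"
proof (cases "finite (fsupp f)")
  case True
  have "finite K" using assms(2) finite_I by (rule finite_subset)
  with True assms show ?thesis
    by (intro sum_in_ideal_pow_aug mixed_diff_in_ideal_pow) auto
next
  case False
  then show ?thesis using zero_in_ideal_pow_aug by (simp add: zero_fun_def)
qed

lemma group_ring_expansion:
  assumes "f \<in> carrier ZGI"
  shows "f = (\<Sum>K\<in>Pow I. \<Sum>g\<in>fsupp f. (\<lambda>x. f g * mixed_diff I G K g x))"
proof
  fix x
  have fs: "finite (fsupp f)" "fsupp f \<subseteq> carrier GI"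
    using assms by (auto simp: group_ring_def)
  have moebius: "(\<Sum>K\<in>Pow I. mixed_diff I G K g x) = (if x = g then 1 else 0)"
    if "g \<in> carrier GI" for g
    using sum_Pow_alternating_inversion[OF finite_I, of "\<lambda>L. if x = pad_one I G L g then 1 else 0"]
      pad_one_all[OF that]
    by (simp add: mixed_diff_def)
  have "f x = (\<Sum>g\<in>fsupp f. if g = x then f g else 0)"
    using fs(1) by (simp add: sum.delta fsupp_def)
  also have "\<dots> = (\<Sum>g\<in>fsupp f. f g * (\<Sum>K\<in>Pow I. mixed_diff I G K g x))"
    using fs(2) by (intro sum.cong) (auto simp: moebius)
  also have "\<dots> = (\<Sum>K\<in>Pow I. \<Sum>g\<in>fsupp f. f g * mixed_diff I G K g x)"
    unfolding sum_distrib_left by (rule sum.swap)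
  finally show "f x = (\<Sum>K\<in>Pow I. \<Sum>g\<in>fsupp f. (\<lambda>x. f g * mixed_diff I G K g x)) x"
    by (simp add: sum_fun_apply)
qed

lemma mixed_diff_terms_vanish:
  assumes "finite (fsupp f)" "K \<subseteq> I" "card K < s"
    and kernel: "\<And>L. L \<subseteq> I \<Longrightarrow> card L < s \<Longrightarrow> f \<in> a_kernel ZGI
                     (group_ring (product_group L G)) (induced_map (proj L))"
  shows "(\<Sum>g\<in>fsupp f. (\<lambda>x. f g * mixed_diff I G K g x)) = (\<lambda>x. 0)"
proof
  fix x
  have "(\<Sum>g\<in>fsupp f. f g * mixed_diff I G K g x)
      = (\<Sum>L\<in>Pow K. (-1) ^ card (K - L) * (\<Sum>g\<in>fsupp f. if x = pad_one I G L g then f g else 0))"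
    unfolding mixed_diff_def sum_distrib_left by (subst sum.swap) (intro sum.cong refl; simp)
  also have "\<dots> = (\<Sum>L\<in>Pow K. (-1) ^ card (K - L) * induced_map (pad_one I G L) f x)"
    using assms(1) by (simp add: induced_map_def sum.inter_filter eq_commute)
  also have "\<dots> = 0"
  proof (rule sum.neutral, rule ballI)
    fix L assume "L \<in> Pow K"
    then have "card L \<le> card K"
      using card_mono[OF finite_subset[OF assms(2) finite_I]] by blast
    with \<open>L \<in> Pow K\<close> assms(2,3) have L: "L \<subseteq> I" "card L < s" by auto
    then have "induced_map (proj L) f = (\<lambda>y. 0)"
      using kernel by (simp add: a_kernel_def' group_ring_def)
    then have "induced_map (pad_one I G L) f x = 0"
      using pad_one_eq_iff_proj_eq[OF L(1)] by (intro induced_map_eq_zero_if_same_fibres) auto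
    then show "(-1) ^ card (K - L) * induced_map (pad_one I G L) f x = 0" by simp
  qed
  finally show "(\<Sum>g\<in>fsupp f. (\<lambda>x. f g * mixed_diff I G K g x)) x = 0"
    by (simp add: sum_fun_apply)
qed

end

theorem mainTheorem4:
  fixes G :: "'i \<Rightarrow> ('g, 'b) monoid_scheme" and I :: "'i set" and s :: nat
  assumes "finite I"
    and "\<And>i. i \<in> I \<Longrightarrow> group (G i)"
  shows "carrier (group_ring (product_group I G)) \<inter> (\<Inter>J \<in> {J. J \<subseteq> I \<and> card J < s}.
            a_kernel (group_ring (product_group I G)) (group_ring (product_group J G))
                     (induced_map (proj J)))
         \<subseteq> ideal_pow (group_ring (product_group I G)) (aug_ideal (product_group I G)) s"
proof
  fix f assume f: "f \<in> carrier (group_ring (product_group I G)) \<inter> (\<Inter>J \<in> {J. J \<subseteq> I \<and> card J < s}.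
            a_kernel (group_ring (product_group I G)) (group_ring (product_group J G))
                     (induced_map (proj J)))"
  let ?T = "\<lambda>K. \<Sum>g\<in>fsupp f. (\<lambda>x. f g * mixed_diff I G K g x)"
  have f_carrier: "f \<in> carrier (group_ring (product_group I G))" using f by blast
  then have supp: "finite (fsupp f)" "fsupp f \<subseteq> carrier (product_group I G)"
    by (auto simp: group_ring_def)
  have small_terms: "?T K = 0" if "K \<in> Pow I - {K \<in> Pow I. s \<le> card K}" for K
    using that f by (auto simp: zero_fun_def intro!: mixed_diff_terms_vanish[OF assms supp(1)])
  have "f = (\<Sum>K\<in>Pow I. ?T K)"
    by (rule group_ring_expansion[OF assms f_carrier])
  also have "\<dots> = (\<Sum>K\<in>{K \<in> Pow I. s \<le> card K}. ?T K)"
    using assms(1) small_terms by (intro sum.mono_neutral_right) auto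
  also have "\<dots> \<in> ideal_pow (group_ring (product_group I G)) (aug_ideal (product_group I G)) s"
    using assms(1) supp(2) by (intro sum_in_ideal_pow_aug mixed_diff_terms_in_ideal_pow[OF assms]) auto
  finally show "f \<in> ideal_pow (group_ring (product_group I G)) (aug_ideal (product_group I G)) s" .
qed

end
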